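(* Let $(X,\mathrm{d})$ be a metric space, $P\subseteq X$ finite, $\varepsilon>0$, $q\in X$, and let $y$ be any point of $\varepsilon\text{-}\mathrm{NN}_P(q)$. Then every point $p\in \mathrm{RNN}_P(q)$ such that $\mathrm{d}(p,P)\ge\frac{\mathrm{d}(q,y)}{\varepsilon}$ belongs to $\varepsilon\text{-}\mathrm{RNN}_P(y)\cup\{y\}$.
   Context: For $x\in X$, $\mathrm{d}(x,P)=\min\{\mathrm{d}(x,p):p\in P\setminus\{x\}\}$. $\varepsilon\text{-}\mathrm{NN}_P(x)$ is the set of $p\in P\setminus\{x\}$ with $\mathrm{d}(x,p)\le(1+\varepsilon)\mathrm{d}(x,P)$. $\mathrm{RNN}_P(x)$ is the set of $p\in P\setminus\{x\}$ such that $x$ is a nearest neighbor of $p$ among $(P\cup\{x\})\setminus\{p\}$, i.e. $\mathrm{d}(p,x)\le\mathrm{d}(p,P)$. $\varepsilon\text{-}\mathrm{RNN}_P(x)$ is the set of $p\in P\setminus\{x\}$ such that $x$ is an $\varepsilon$-nearest neighbor of $p$ among $(P\cup\{x\})\setminus\{p\}$, i.e. $\mathrm{d}(p,x)\le(1+\varepsilon)\mathrm{d}(p,P)$. *)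

theory Defs
  imports "HOL-Analysis.Analysis"
begin

definition dist_to_set :: "'a::metric_space \<Rightarrow> 'a set \<Rightarrow> real" where
  "dist_to_set x P = Min ((\<lambda>p. dist x p) ` (P - {x}))"

definition eps_NN :: "'a::metric_space set \<Rightarrow> real \<Rightarrow> 'a \<Rightarrow> 'a set" where
  "eps_NN P eps x = {p \<in> P - {x}. dist x p \<le> (1 + eps) * dist_to_set x P}"

definition RNN :: "'a::metric_space set \<Rightarrow> 'a \<Rightarrow> 'a set" where
  "RNN P x = {p \<in> P - {x}. dist p x \<le> dist_to_set p P}"

definition eps_RNN :: "'a::metric_space set \<Rightarrow> real \<Rightarrow> 'a \<Rightarrow> 'a set" where
  "eps_RNN P eps x = {p \<in> P - {x}. dist p x \<le> (1 + eps) * dist_to_set p P}"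

end

theory Submission
  imports Defs
begin

text \<open>Only the distance bound on \<open>y\<close> matters, not that it is an approximate nearest
  neighbour of \<open>q\<close>: by the triangle inequality \<open>d(p,y) \<le> d(p,q) + d(q,y) \<le> d(p,P) + \<epsilon> d(p,P)\<close>.\<close>

lemma RNN_imp_eps_RNN_if_close:
  assumes p: "p \<in> RNN P q" and close: "dist q y \<le> eps * dist_to_set p P"
  shows "p \<in> eps_RNN P eps y \<union> {y}"
proof -
  have "p \<in> P" and pq: "dist p q \<le> dist_to_set p P"
    using p by (auto simp: RNN_def)
  have "dist p y \<le> dist p q + dist q y" by (rule dist_triangle)
  also have "\<dots> \<le> (1 + eps) * dist_to_set p P"
    using pq close by (simp add: algebra_simps)
  finally show ?thesis using \<open>p \<in> P\<close> by (auto simp: eps_RNN_def)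
qed

theorem mainTheorem10:
  fixes P :: "'a::metric_space set" and q y :: 'a and eps :: real
  assumes "finite P" and "eps > 0" and "y \<in> eps_NN P eps q"
  shows "\<forall>p \<in> RNN P q. dist_to_set p P \<ge> dist q y / eps \<longrightarrow> p \<in> eps_RNN P eps y \<union> {y}"
proof (intro ballI impI)
  fix p assume "p \<in> RNN P q" and "dist_to_set p P \<ge> dist q y / eps"
  then have "dist q y \<le> eps * dist_to_set p P"
    using \<open>eps > 0\<close> by (simp add: divide_le_eq mult.commute)
  with \<open>p \<in> RNN P q\<close> show "p \<in> eps_RNN P eps y \<union> {y}"
    by (rule RNN_imp_eps_RNN_if_close)
qed

end
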